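(* Let $(G_1^p,G_2^p)$ be a pair of twin polymer graphs. Then the Weisfeiler–Lehman (WL) test cannot distinguish $G_1^p$ and $G_2^p$: at every iteration of WL color refinement, the multiset of colors of the nodes in one period of $G_1^p$ equals the multiset of colors of the nodes in one period of $G_2^p$.
   Context: A monomer graph is $G=(V,E,\mathbf{X})$ with atoms $V=\{v_0,\dots,v_{n-1}\}$, bonds $E$, atom features $\mathbf{x}_i$, and boundary atoms $v_0,v_{n-1}$. Its polymer graph $G^p$ has nodes $v^p_i$, $i\in\mathbb{Z}$, with $v^p_i$ carrying the features of $v_{i\bmod n}$, and edges $(v^p_{kn+a},v^p_{kn+b})$ for all $k\in\mathbb{Z}$ and $(v_a,v_b)\in E$, plus $(v^p_{kn-1},v^p_{kn})$ for all $k\in\mathbb{Z}$. Its induced star-linking graph $G^*$ has node set $V$, edge set $E\cup\{(v_0,v_{n-1})\}$ and the same features. Two polymers with monomer graphs $G_1,G_2$ and polymer graphs $G_1^p\ne G_2^p$ (non-isomorphic) form a pair of twin polymer graphs if their induced star-linking graphs coincide, $G_1^*=G_2^*$ (i.e. are isomorphic as node-attributed graphs). The WL test initializes node colors by node features and iteratively recolors each node by (a hash of) its current color together with the multiset of its neighbors' colors; colors on a polymer graph are periodic, and one period of $G^p$ is the node set $\{v^p_0,\dots,v^p_{n-1}\}$. *)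

theory Defs
  imports Main "HOL-Library.Multiset"
begin

text \<open>A monomer graph is given by its number of atoms n (atoms are 0..<n, atom 0 and
  atom n-1 are the boundary atoms), a set of bonds E (unordered; a pair (a,b) in E
  stands for the undirected bond between a and b) and atom features X.\<close>

definition monomer_wf :: "nat \<Rightarrow> (nat \<times> nat) set \<Rightarrow> bool" where
  "monomer_wf n E \<longleftrightarrow> 2 \<le> n \<and> E \<subseteq> {0..<n} \<times> {0..<n} \<and> (\<forall>a. (a, a) \<notin> E)
     \<and> (0, n - 1) \<notin> E \<and> (n - 1, 0) \<notin> E"

definition poly_adj :: "nat \<Rightarrow> (nat \<times> nat) set \<Rightarrow> int \<Rightarrow> int \<Rightarrow> bool" where
  "poly_adj n E i j \<longleftrightarrow>
     (\<exists>k a b. ((a, b) \<in> E \<or> (b, a) \<in> E) \<and> i = k * int n + int a \<and> j = k * int n + int b)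
   \<or> (\<exists>k. (i = k * int n - 1 \<and> j = k * int n) \<or> (i = k * int n \<and> j = k * int n - 1))"

definition poly_feat :: "nat \<Rightarrow> (nat \<Rightarrow> 'c) \<Rightarrow> int \<Rightarrow> 'c" where
  "poly_feat n X i = X (nat (i mod int n))"

definition star_adj :: "nat \<Rightarrow> (nat \<times> nat) set \<Rightarrow> nat \<Rightarrow> nat \<Rightarrow> bool" where
  "star_adj n E a b \<longleftrightarrow> a < n \<and> b < n \<and>
     ((a, b) \<in> E \<or> (b, a) \<in> E \<or> (a = 0 \<and> b = n - 1) \<or> (a = n - 1 \<and> b = 0))"

definition star_iso :: "nat \<Rightarrow> (nat \<times> nat) set \<Rightarrow> (nat \<Rightarrow> 'c) \<Rightarrow>
                        nat \<Rightarrow> (nat \<times> nat) set \<Rightarrow> (nat \<Rightarrow> 'c) \<Rightarrow> bool" where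
  "star_iso n1 E1 X1 n2 E2 X2 \<longleftrightarrow>
     (\<exists>f. bij_betw f {0..<n1} {0..<n2} \<and> (\<forall>a<n1. X2 (f a) = X1 a) \<and>
          (\<forall>a<n1. \<forall>b<n1. star_adj n2 E2 (f a) (f b) \<longleftrightarrow> star_adj n1 E1 a b))"

definition poly_iso :: "nat \<Rightarrow> (nat \<times> nat) set \<Rightarrow> (nat \<Rightarrow> 'c) \<Rightarrow>
                        nat \<Rightarrow> (nat \<times> nat) set \<Rightarrow> (nat \<Rightarrow> 'c) \<Rightarrow> bool" where
  "poly_iso n1 E1 X1 n2 E2 X2 \<longleftrightarrow>
     (\<exists>f :: int \<Rightarrow> int. bij f \<and> (\<forall>i. poly_feat n2 X2 (f i) = poly_feat n1 X1 i) \<and>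
          (\<forall>i j. poly_adj n2 E2 (f i) (f j) \<longleftrightarrow> poly_adj n1 E1 i j))"

definition twin_polymers :: "nat \<Rightarrow> (nat \<times> nat) set \<Rightarrow> (nat \<Rightarrow> 'c) \<Rightarrow>
                        nat \<Rightarrow> (nat \<times> nat) set \<Rightarrow> (nat \<Rightarrow> 'c) \<Rightarrow> bool" where
  "twin_polymers n1 E1 X1 n2 E2 X2 \<longleftrightarrow>
     \<not> poly_iso n1 E1 X1 n2 E2 X2 \<and> star_iso n1 E1 X1 n2 E2 X2"

fun wl :: "('c \<Rightarrow> 'c multiset \<Rightarrow> 'c) \<Rightarrow> ('v \<Rightarrow> 'v \<Rightarrow> bool) \<Rightarrow> ('v \<Rightarrow> 'c) \<Rightarrow> nat \<Rightarrow> 'v \<Rightarrow> 'c" where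
  "wl h adj x 0 v = x v"
| "wl h adj x (Suc t) v = h (wl h adj x t v) (image_mset (wl h adj x t) (mset_set {u. adj v u}))"

end

theory Submission
  imports Defs
begin

text \<open>WL colours are preserved by locally bijective homomorphisms (graph coverings): by
  induction on the round, a map sending the neighbourhood of every node bijectively onto the
  neighbourhood of its image maps neighbour colour multisets onto each other. Reduction
  modulo n is such a map from the polymer graph onto the star-linking graph, since the link
  between consecutive periods joins the boundary atoms just as the extra edge of G^* does;
  here it matters that v_0 and v_{n-1} are not already bonded. Hence one period of a polymer
  graph carries the colours of its star-linking graph, and these agree for twins.\<close>

lemma image_mset_mset_set_bij_betw:
  assumes "bij_betw p A B" and "\<And>a. a \<in> A \<Longrightarrow> g (p a) = f a"
  shows "image_mset g (mset_set B) = image_mset f (mset_set A)"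
proof -
  have "mset_set B = image_mset p (mset_set A)"
    using assms(1) by (simp add: bij_betw_def image_mset_mset_set)
  also have "image_mset g \<dots> = image_mset f (mset_set A)"
    using assms(2) by (cases "finite A") (auto simp: multiset.map_comp intro: image_mset_cong)
  finally show ?thesis .
qed

definition locally_bijective_on ::
    "'v set \<Rightarrow> ('v \<Rightarrow> 'v \<Rightarrow> bool) \<Rightarrow> ('w \<Rightarrow> 'w \<Rightarrow> bool) \<Rightarrow> ('v \<Rightarrow> 'w) \<Rightarrow> bool" where
  "locally_bijective_on V adj adj' p \<longleftrightarrow>
     (\<forall>v\<in>V. {u. adj v u} \<subseteq> V \<and> bij_betw p {u. adj v u} {w. adj' (p v) w})"

lemma wl_locally_bijective:
  assumes "locally_bijective_on V adj adj' p" and "\<And>v. v \<in> V \<Longrightarrow> y (p v) = x v"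
    and "v \<in> V"
  shows "wl h adj' y t (p v) = wl h adj x t v"
  using \<open>v \<in> V\<close>
proof (induction t arbitrary: v)
  case 0
  then show ?case by (simp add: assms(2))
next
  case (Suc t)
  have "bij_betw p {u. adj v u} {w. adj' (p v) w}" and "{u. adj v u} \<subseteq> V"
    using assms(1) Suc.prems unfolding locally_bijective_on_def by auto
  then have "image_mset (wl h adj' y t) (mset_set {w. adj' (p v) w})
      = image_mset (wl h adj x t) (mset_set {u. adj v u})"
    by (intro image_mset_mset_set_bij_betw) (auto intro: Suc.IH)
  then show ?case by (simp add: Suc.IH Suc.prems)
qed

lemma int_div_mod_unique:
  assumes "a < n" and "a' < n" and "k * int n + int a = k' * int n + int a'"
  shows "k = k'" and "a = a'"
proof -
  have "k = (k * int n + int a) div int n" "int a = (k * int n + int a) mod int n"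
    "k' = (k' * int n + int a') div int n" "int a' = (k' * int n + int a') mod int n"
    using assms(1,2) by simp_all
  then show "k = k'" "a = a'"
    unfolding assms(3) by simp_all
qed

text \<open>The neighbour of node k n + a in the residue class of b; only the link between
  the boundary atoms leaves period k.\<close>
definition period_lift :: "nat \<Rightarrow> int \<Rightarrow> nat \<Rightarrow> nat \<Rightarrow> int" where
  "period_lift n k a b =
     (if a = 0 \<and> b = n - 1 then k * int n - 1
      else if a = n - 1 \<and> b = 0 then (k + 1) * int n
      else k * int n + int b)"

lemma period_lift_mod:
  assumes "b < n"
  shows "nat (period_lift n k a b mod int n) = b"
proof -
  have residue: "(k' * int n + int c) mod int n = int c" if "c < n" for k' c
    using that by simp
  consider "a = 0 \<and> b = n - 1" | "a = n - 1 \<and> b = 0" | "period_lift n k a b = k * int n + int b"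
    by (metis period_lift_def)
  then show ?thesis
  proof cases
    case 1
    then have "period_lift n k a b = (k - 1) * int n + int (n - 1)"
      using assms by (simp add: period_lift_def algebra_simps of_nat_diff)
    moreover have "n - 1 < n" using assms by simp
    ultimately show ?thesis
      using 1 by (simp only: residue nat_int)
  next
    case 2
    with assms show ?thesis by (simp add: period_lift_def)
  qed (simp add: residue assms)
qed

lemma poly_adj_iff_period_lift:
  assumes wf: "monomer_wf n E" and "a < n"
  shows "poly_adj n E (k * int n + int a) u \<longleftrightarrow> (\<exists>b. star_adj n E a b \<and> u = period_lift n k a b)"
proof -
  have n2: "2 \<le> n" and E: "E \<subseteq> {0..<n} \<times> {0..<n}" "(0, n - 1) \<notin> E" "(n - 1, 0) \<notin> E"
    using wf unfolding monomer_wf_def by auto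
  have boundary: "k * int n - 1 = (k - 1) * int n + int (n - 1)" for k
    using n2 by (simp add: algebra_simps of_nat_diff)
  have unique: "k = k' \<and> a = a'" if "a' < n" "k * int n + int a = k' * int n + int a'" for k' a'
    using int_div_mod_unique[OF \<open>a < n\<close> that] by simp
  show ?thesis
  proof
    assume "poly_adj n E (k * int n + int a) u"
    then consider (bond) k' a' b where "(a', b) \<in> E \<or> (b, a') \<in> E"
        "k * int n + int a = k' * int n + int a'" "u = k' * int n + int b"
      | (right) k' where "k * int n + int a = k' * int n - 1" "u = k' * int n"
      | (left) k' where "k * int n + int a = k' * int n" "u = k' * int n - 1"
      unfolding poly_adj_def by blast
    then show "\<exists>b. star_adj n E a b \<and> u = period_lift n k a b"
    proof cases
      case bond
      with E unique have "k' = k" "a' = a" "b < n" by auto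
      with bond E show ?thesis
        by (intro exI[of _ b]) (auto simp: star_adj_def period_lift_def)
    next
      case right
      with boundary[of k'] unique[of "n - 1" "k' - 1"] n2 have "k = k' - 1" "a = n - 1" by auto
      with right n2 show ?thesis
        by (intro exI[of _ 0]) (auto simp: star_adj_def period_lift_def)
    next
      case left
      with unique[of 0 k'] n2 have "k = k'" "a = 0" by auto
      with left n2 show ?thesis
        by (intro exI[of _ "n - 1"]) (auto simp: star_adj_def period_lift_def)
    qed
  next
    assume "\<exists>b. star_adj n E a b \<and> u = period_lift n k a b"
    then obtain b where b: "star_adj n E a b" "u = period_lift n k a b" by blast
    consider "a = 0 \<and> b = n - 1" | "a = n - 1 \<and> b = 0" | "(a, b) \<in> E \<or> (b, a) \<in> E"
      using b(1) unfolding star_adj_def by blast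
    then show "poly_adj n E (k * int n + int a) u"
    proof cases
      case 1
      with b(2) n2 have "k * int n + int a = k * int n \<and> u = k * int n - 1"
        by (simp add: period_lift_def)
      then show ?thesis unfolding poly_adj_def by blast
    next
      case 2
      with b(2) n2 have "k * int n + int a = (k + 1) * int n - 1 \<and> u = (k + 1) * int n"
        by (simp add: period_lift_def algebra_simps of_nat_diff)
      then show ?thesis unfolding poly_adj_def by blast
    next
      case 3
      with b(2) E have "u = k * int n + int b"
        by (auto simp: period_lift_def)
      with 3 show ?thesis unfolding poly_adj_def by blast
    qed
  qed
qed

lemma locally_bijective_poly_star:
  assumes wf: "monomer_wf n E"
  shows "locally_bijective_on UNIV (poly_adj n E) (star_adj n E) (\<lambda>i. nat (i mod int n))"
  unfolding locally_bijective_on_def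
proof (intro ballI conjI)
  fix i :: int
  have "0 < n" using wf unfolding monomer_wf_def by auto
  define k a where "k = i div int n" and "a = nat (i mod int n)"
  have "a < n" and i: "i = k * int n + int a"
    using \<open>0 < n\<close> unfolding k_def a_def by (simp_all add: nat_less_iff)
  define S where "S = {b. star_adj n E a b}"
  have lift_mod: "nat (period_lift n k a b mod int n) = b" if "b \<in> S" for b
    using that by (intro period_lift_mod) (simp add: S_def star_adj_def)
  have "{u. poly_adj n E i u} = period_lift n k a ` S"
    using poly_adj_iff_period_lift[OF wf \<open>a < n\<close>] unfolding i S_def by blast
  moreover have "bij_betw (\<lambda>i. nat (i mod int n)) (period_lift n k a ` S) S"
  proof (rule bij_betw_imageI)
    show "inj_on (\<lambda>i. nat (i mod int n)) (period_lift n k a ` S)"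
      by (rule inj_onI) (metis imageE lift_mod)
    show "(\<lambda>i. nat (i mod int n)) ` period_lift n k a ` S = S"
      by (simp add: image_image lift_mod)
  qed
  ultimately show "bij_betw (\<lambda>i. nat (i mod int n)) {u. poly_adj n E i u}
      {w. star_adj n E (nat (i mod int n)) w}"
    unfolding S_def a_def by simp
qed simp

lemma wl_poly_period_eq_wl_star:
  assumes "monomer_wf n E"
  shows "image_mset (wl h (poly_adj n E) (poly_feat n X) t) (mset_set {0..<int n})
       = image_mset (wl h (star_adj n E) X t) (mset_set {0..<n})"
proof (rule image_mset_mset_set_bij_betw)
  show "bij_betw int {0..<n} {0..<int n}"
    by (metis bij_betw_imageI image_int_atLeastLessThan inj_on_of_nat of_nat_0)
  fix a assume "a \<in> {0..<n}"
  have "wl h (star_adj n E) X t (nat (int a mod int n)) = wl h (poly_adj n E) (poly_feat n X) t (int a)"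
    by (rule wl_locally_bijective[OF locally_bijective_poly_star[OF assms]])
      (simp_all add: poly_feat_def)
  with \<open>a \<in> {0..<n}\<close> show "wl h (poly_adj n E) (poly_feat n X) t (int a) = wl h (star_adj n E) X t a"
    by simp
qed

lemma locally_bijective_star_iso:
  assumes bij: "bij_betw f {0..<n1} {0..<n2}"
    and adj: "\<forall>a<n1. \<forall>b<n1. star_adj n2 E2 (f a) (f b) \<longleftrightarrow> star_adj n1 E1 a b"
  shows "locally_bijective_on {0..<n1} (star_adj n1 E1) (star_adj n2 E2) f"
  unfolding locally_bijective_on_def
proof (intro ballI conjI)
  fix a assume a: "a \<in> {0..<n1}"
  show sub: "{b. star_adj n1 E1 a b} \<subseteq> {0..<n1}"
    unfolding star_adj_def by auto
  have "{w. star_adj n2 E2 (f a) w} = f ` {b. star_adj n1 E1 a b}"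
  proof (intro subset_antisym subsetI)
    fix w assume w: "w \<in> {w. star_adj n2 E2 (f a) w}"
    then have "w \<in> f ` {0..<n1}" using bij unfolding bij_betw_def star_adj_def by auto
    with w a adj show "w \<in> f ` {b. star_adj n1 E1 a b}" by auto
  qed (use a adj sub in auto)
  moreover have "inj_on f {b. star_adj n1 E1 a b}"
    using bij sub unfolding bij_betw_def by (blast intro: inj_on_subset)
  ultimately show "bij_betw f {b. star_adj n1 E1 a b} {w. star_adj n2 E2 (f a) w}"
    by (simp add: bij_betw_def)
qed

lemma wl_star_eq_if_star_iso:
  assumes "star_iso n1 E1 X1 n2 E2 X2"
  shows "image_mset (wl h (star_adj n1 E1) X1 t) (mset_set {0..<n1})
       = image_mset (wl h (star_adj n2 E2) X2 t) (mset_set {0..<n2})"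
proof -
  obtain f where bij: "bij_betw f {0..<n1} {0..<n2}" and feat: "\<forall>a<n1. X2 (f a) = X1 a"
    and adj: "\<forall>a<n1. \<forall>b<n1. star_adj n2 E2 (f a) (f b) \<longleftrightarrow> star_adj n1 E1 a b"
    using assms unfolding star_iso_def by blast
  have "wl h (star_adj n2 E2) X2 t (f a) = wl h (star_adj n1 E1) X1 t a" if "a \<in> {0..<n1}" for a
    using that feat by (intro wl_locally_bijective[OF locally_bijective_star_iso[OF bij adj]]) auto
  then show ?thesis
    by (intro image_mset_mset_set_bij_betw[OF bij, symmetric])
qed

theorem lemma1:
  fixes n1 n2 :: nat and E1 E2 :: "(nat \<times> nat) set" and X1 X2 :: "nat \<Rightarrow> 'c"
    and h :: "'c \<Rightarrow> 'c multiset \<Rightarrow> 'c"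
  assumes "monomer_wf n1 E1" and "monomer_wf n2 E2"
    and "twin_polymers n1 E1 X1 n2 E2 X2"
  shows "\<forall>t. image_mset (wl h (poly_adj n1 E1) (poly_feat n1 X1) t) (mset_set {0..<int n1})
           = image_mset (wl h (poly_adj n2 E2) (poly_feat n2 X2) t) (mset_set {0..<int n2})"
  using wl_star_eq_if_star_iso[of n1 E1 X1 n2 E2 X2 h] assms
  by (simp add: twin_polymers_def wl_poly_period_eq_wl_star)

end
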